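(* Consider the transverse-field Ising chain $H=-J\sum_\ell[\sigma^x_\ell\sigma^x_{\ell+1}+h\sigma^z_\ell]$ on a periodic chain of $L$ sites, restricted to the antiperiodic (Neveu–Schwarz) fermion sector with momenta $p=2\pi(n+1/2)/L$, $n$ integer, and let $\alpha_p$ be the Bogoliubov fermions diagonalizing the post-quench Hamiltonian, $n_p=\alpha^\dagger_p\alpha_p$. For $0<p<\pi$ define the ghost fermions $g^\dagger_p=(1-n_{-p})\alpha^\dagger_p+n_{-p}\alpha_p$ and the pair fermions $d^\dagger_p=\prod_{0<k<p}(2\tilde d^\dagger_k\tilde d_k-1)\prod_{0<k\neq p}(2g^\dagger_kg_k-1)\,\tilde d^\dagger_p$ with $\tilde d^\dagger_p=(\alpha^\dagger_p+\alpha_p)\alpha^\dagger_{-p}$; these satisfy canonical anticommutation relations, with $n^d_p=d^\dagger_pd_p$, $n^g_p=g^\dagger_pg_p$, $e^{i\pi\mathcal N_g}=\prod_{0<k<\pi}(2n^g_k-1)$, and the inverse map $\alpha^\dagger_p=(1-n^d_p)g^\dagger_p+n^d_pg_p$, $\alpha^\dagger_{-p}=\prod_{0<k<p}(2n^d_k-1)\,d^\dagger_p\,e^{i\pi\mathcal N_g}(g^\dagger_p-g_p)$. Let $a_i=\frac{1}{\sqrt L}\sum_{0<p<\pi}W_i(p)g_p+W_i(-p)g^\dagger_p$ (with $W_i(-p)=W_i^\dagger(p)$) be Majorana fermions that are linear combinations of the Bogoliubov fermions $\alpha$, written via the inverse map so that the coefficients $W_i(p)$ are operators built from pair fermions and $e^{i\pi\mathcal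 N_g}$ and commute with all ghost operators. Then $$G_0\,a_1\cdots a_n\,G_0=\frac{1}{L^{n/2}}\sum_{-\pi<p_1,\dots,p_n<\pi}W_1(p_1)\cdots W_n(p_n)\,\mathrm{Pf}\Bigl([\theta(p_i)\delta_{p_i,-p_j}]_{i<j}\Bigr)\,G_0,$$ where $[M(i,j)]_{i<j}$ denotes the skew-symmetric $n\times n$ matrix whose upper triangular entries are $M(i,j)$, $\theta$ is the Heaviside step function, $\delta$ is the Kronecker delta, and $G_0\equiv\prod_{0<k<\pi}g_kg^\dagger_k$ is the projector on the ghost vacuum.
   Context: Setting: time evolution after a quench $h_0\to h$ of the transverse field in the periodic transverse-field Ising chain, starting from the ground state at $h_0$. The time-averaged (diagonal, "pair") ensemble is $\rho_{PE}=\prod_{0<k}g_kg^\dagger_k\exp\bigl(\sum_{0<p}\log K^2(p)\,d^\dagger_pd_p-\log(1+K^2(p))\bigr)$, i.e. the ghost-vacuum projector times a Gaussian state of pair fermions. Local spin operators are strings of Jordan–Wigner Majorana fermions $a_{2\ell}=\prod_{j<\ell}\sigma^z_j\sigma^x_\ell$, $a_{2\ell-1}=\prod_{j<\ell}\sigma^z_j\sigma^y_\ell$, which are linear in the $\alpha$'s and hence linear in the ghost operators. *)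

theory Defs
  imports "HOL-Combinatorics.Permutations" Complex_Main
begin

definition ns_momenta :: "nat \<Rightarrow> real set" where
  "ns_momenta L = {p. \<exists>n::int. p = 2 * pi * (real_of_int n + 1/2) / real L}"

definition pos_momenta :: "nat \<Rightarrow> real set" where
  "pos_momenta L = {p \<in> ns_momenta L. 0 < p \<and> p < pi}"

definition all_momenta :: "nat \<Rightarrow> real set" where
  "all_momenta L = {p \<in> ns_momenta L. - pi < p \<and> p < pi}"

definition heaviside :: "real \<Rightarrow> real" where
  "heaviside x = (if 0 < x then 1 else 0)"

definition kdelta :: "real \<Rightarrow> real \<Rightarrow> real" where
  "kdelta x y = (if x = y then 1 else 0)"

definition pfaffian :: "nat \<Rightarrow> (nat \<Rightarrow> nat \<Rightarrow> real) \<Rightarrow> real" where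
  "pfaffian n A =
     (if odd n then 0
      else (\<Sum>\<sigma> | \<sigma> permutes {..<n}.
              of_int (sign \<sigma>) * (\<Prod>i<n div 2. A (\<sigma> (2*i)) (\<sigma> (2*i+1))))
           / (2 ^ (n div 2) * fact (n div 2)))"

definition skew_upper :: "(nat \<Rightarrow> nat \<Rightarrow> real) \<Rightarrow> nat \<Rightarrow> nat \<Rightarrow> real" where
  "skew_upper M i j = (if i < j then M i j else if j < i then - M j i else 0)"

text \<open>Ghost vacuum projector G0 = prod_{0<k<pi} g_k g_k^dagger (factors in increasing k;
  they commute pairwise anyway).\<close>
definition ghost_vacuum :: "nat \<Rightarrow> (real \<Rightarrow> 'a::monoid_mult) \<Rightarrow> ('a \<Rightarrow> 'a) \<Rightarrow> 'a" where
  "ghost_vacuum L g adj =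
     prod_list (map (\<lambda>k. g k * adj (g k)) (sorted_list_of_set (pos_momenta L)))"

definition is_adjoint :: "('a::real_algebra_1 \<Rightarrow> 'a) \<Rightarrow> bool" where
  "is_adjoint adj \<longleftrightarrow>
     (\<forall>x. adj (adj x) = x) \<and> (\<forall>x y. adj (x + y) = adj x + adj y) \<and>
     (\<forall>x y. adj (x * y) = adj y * adj x) \<and> (\<forall>r x. adj (r *\<^sub>R x) = r *\<^sub>R adj x) \<and>
     adj 1 = 1"

end

theory Submission
  imports Defs
begin

text \<open>Write \<open>c p = g p\<close> for \<open>p > 0\<close> and \<open>c p = adj (g (- p))\<close> for \<open>p < 0\<close>
  (\<open>ghost_mode\<close> below). Then \<open>a i\<close> is \<open>1 / sqrt L\<close> times the sum of \<open>W i p * c p\<close> over all momenta in \<open>(-pi, pi)\<close>. The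
  coefficients commute with the ghosts, hence with \<open>G0\<close>, so after distributing the product the
  claim reduces to Wick's theorem in the ghost vacuum:
  \<open>G0 * c q1 * ... * c qn * G0 = Pf [heaviside qi * kdelta qi (- qj)] * G0\<close>.
  This follows by induction on \<open>n\<close>: a leading creator is killed by \<open>G0\<close> on the left, and a
  leading annihilator is anticommuted to the right, where \<open>G0\<close> kills it; passing \<open>c qj\<close> it
  picks up \<open>(-1)^(j-1) * kdelta q1 (- qj)\<close>, which is exactly the expansion of the Pfaffian
  along its first row. That expansion is derived from the permutation-sum definition of the
  Pfaffian by moving the pair that contains \<open>0\<close> to the front.\<close>

section \<open>Expansion of the Pfaffian along the first row\<close>

definition pairing_term :: "nat \<Rightarrow> (nat \<Rightarrow> nat \<Rightarrow> real) \<Rightarrow> (nat \<Rightarrow> nat) \<Rightarrow> real" where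
  "pairing_term k A \<sigma> = of_int (sign \<sigma>) * (\<Prod>i<k. A (\<sigma> (2*i)) (\<sigma> (2*i+1)))"

definition pfaffian_sum :: "nat \<Rightarrow> (nat \<Rightarrow> nat \<Rightarrow> real) \<Rightarrow> real" where
  "pfaffian_sum n A = (\<Sum>\<sigma> | \<sigma> permutes {..<n}. pairing_term (n div 2) A \<sigma>)"

lemma pfaffian_eq_pfaffian_sum:
  "even n \<Longrightarrow> pfaffian n A = pfaffian_sum n A / (2 ^ (n div 2) * fact (n div 2))"
  by (simp add: pfaffian_def pfaffian_sum_def pairing_term_def)

lemma pfaffian_cong:
  assumes "\<And>i j. i < n \<Longrightarrow> j < n \<Longrightarrow> A i j = B i j"
  shows "pfaffian n A = pfaffian n B"
proof -
  have "(\<Prod>i<n div 2. A (\<sigma> (2*i)) (\<sigma> (2*i+1))) = (\<Prod>i<n div 2. B (\<sigma> (2*i)) (\<sigma> (2*i+1)))"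
    if p: "\<sigma> permutes {..<n}" for \<sigma>
  proof (rule prod.cong[OF refl])
    fix i assume "i \<in> {..<n div 2}"
    then have "2*i < n" "2*i+1 < n" by auto
    then show "A (\<sigma> (2*i)) (\<sigma> (2*i+1)) = B (\<sigma> (2*i)) (\<sigma> (2*i+1))"
      using permutes_in_image[OF p] assms by auto
  qed
  then show ?thesis unfolding pfaffian_def by (auto intro!: sum.cong)
qed

lemma sum_permutations_by_pair_of_0:
  fixes F :: "(nat \<Rightarrow> nat) \<Rightarrow> 'a::comm_monoid_add"
  shows "(\<Sum>\<sigma> | \<sigma> permutes {..<2*m+2}. F \<sigma>) =
    (\<Sum>k<Suc m. \<Sum>\<sigma> | \<sigma> permutes {..<2*m+2}. if \<sigma> (2*k) = 0 \<or> \<sigma> (2*k+1) = 0 then F \<sigma> else 0)"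
proof -
  have "(\<Sum>k<Suc m. if \<sigma> (2*k) = 0 \<or> \<sigma> (2*k+1) = 0 then F \<sigma> else 0) = F \<sigma>"
    if p: "\<sigma> permutes {..<2*m+2}" for \<sigma>
  proof -
    obtain q where q: "q < 2*m+2" "\<sigma> q = 0"
      using permutes_image[OF p] by (metis imageE lessThan_iff zero_less_Suc add_2_eq_Suc')
    have "(\<sigma> (2*k) = 0 \<or> \<sigma> (2*k+1) = 0) \<longleftrightarrow> k = q div 2" for k
    proof -
      have "(\<sigma> (2*k) = 0 \<or> \<sigma> (2*k+1) = 0) \<longleftrightarrow> (2*k = q \<or> 2*k+1 = q)"
        using permutes_inj[OF p] q(2) by (metis injD)
      also have "\<dots> \<longleftrightarrow> k = q div 2" by auto
      finally show ?thesis .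
    qed
    moreover have "q div 2 < Suc m" using q(1) by presburger
    ultimately show ?thesis by (simp add: sum.delta')
  qed
  then show ?thesis
    by (subst sum.swap) (rule sum.cong[OF refl], simp)
qed

lemma sum_permutations_by_image_of_1:
  fixes F :: "(nat \<Rightarrow> nat) \<Rightarrow> 'a::comm_monoid_add"
  shows "(\<Sum>\<sigma> | \<sigma> permutes {..<2*m+2}. if \<sigma> 0 = 0 then F \<sigma> else 0)
   = (\<Sum>j\<in>{1..2*m+1}. \<Sum>\<sigma> | \<sigma> permutes {..<2*m+2}. if \<sigma> 0 = 0 \<and> \<sigma> 1 = j then F \<sigma> else 0)"
proof -
  have "(\<Sum>j\<in>{1..2*m+1}. if \<sigma> 0 = 0 \<and> \<sigma> 1 = j then F \<sigma> else 0) = (if \<sigma> 0 = 0 then F \<sigma> else 0)"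
    if p: "\<sigma> permutes {..<2*m+2}" for \<sigma>
  proof (cases "\<sigma> 0 = 0")
    case True
    have "\<sigma> 1 \<noteq> 0" using True permutes_inj[OF p] by (metis injD zero_neq_one)
    moreover have "\<sigma> 1 < 2*m+2" using permutes_in_image[OF p, of 1] by simp
    ultimately show ?thesis using True by (simp add: sum.delta)
  qed simp
  then show ?thesis
    by (subst sum.swap) (rule sum.cong[OF refl], simp)
qed

lemma transpose_pairs_even: "(Transposition.transpose 0 (2*(k::nat)) \<circ> Transposition.transpose 1 (2*k+1)) (2*i)
     = 2 * Transposition.transpose 0 k i"
proof -
  have "2*i \<noteq> 2*k+1" "2*i \<noteq> 1" by presburger+
  then show ?thesis by (simp add: Transposition.transpose_def)
qed

lemma transpose_pairs_odd: "(Transposition.transpose 0 (2*(k::nat)) \<circ> Transposition.transpose 1 (2*k+1)) (2*i+1)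
     = 2 * Transposition.transpose 0 k i + 1"
proof -
  have "2*i \<noteq> 2*k+1" "2*i+1 \<noteq> 2*k" "2*i+1 \<noteq> (0::nat)" by presburger+
  then show ?thesis by (simp add: Transposition.transpose_def)
qed

text \<open>Exchanging the pairs \<open>0\<close> and \<open>k\<close> is an even permutation that leaves every pairing term unchanged.\<close>
lemma sum_pairing_terms_pair_of_0:
  assumes k: "k < Suc m"
  shows "(\<Sum>\<sigma> | \<sigma> permutes {..<2*m+2}. if \<sigma> (2*k) = 0 \<or> \<sigma> (2*k+1) = 0 then pairing_term (Suc m) A \<sigma> else 0)
       = (\<Sum>\<sigma> | \<sigma> permutes {..<2*m+2}. if \<sigma> 0 = 0 \<or> \<sigma> 1 = 0 then pairing_term (Suc m) A \<sigma> else 0)"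
proof -
  define \<tau> where "\<tau> = Transposition.transpose 0 (2*k) \<circ> Transposition.transpose 1 (2*k+1)"
  have \<tau>_perm: "\<tau> permutes {..<2*m+2}" unfolding \<tau>_def using k
    by (intro permutes_compose permutes_swap_id) auto
  have \<tau>_sign: "sign \<tau> = 1" unfolding \<tau>_def
    by (subst sign_compose) (auto simp: permutation_swap_id sign_swap_id)
  have \<tau>_first_pair: "\<tau> (2*k) = 0" "\<tau> (2*k+1) = 1"
    using transpose_pairs_even[of k k] transpose_pairs_odd[of k k] unfolding \<tau>_def by auto
  have term_eq: "pairing_term (Suc m) A (\<sigma> \<circ> \<tau>) = pairing_term (Suc m) A \<sigma>"
    if p: "\<sigma> permutes {..<2*m+2}" for \<sigma>
  proof -
    have "sign (\<sigma> \<circ> \<tau>) = sign \<sigma>"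
      by (subst sign_compose)
        (auto simp: \<tau>_sign intro: permutes_imp_permutation[OF _ p] permutes_imp_permutation[OF _ \<tau>_perm])
    moreover have "(\<Prod>i<Suc m. A ((\<sigma> \<circ> \<tau>) (2*i)) ((\<sigma> \<circ> \<tau>) (2*i+1)))
        = (\<Prod>i<Suc m. A (\<sigma> (2*i)) (\<sigma> (2*i+1)))"
    proof -
      have "(\<Prod>i<Suc m. A ((\<sigma> \<circ> \<tau>) (2*i)) ((\<sigma> \<circ> \<tau>) (2*i+1)))
        = (\<Prod>i<Suc m. A (\<sigma> (2 * Transposition.transpose 0 k i)) (\<sigma> (2 * Transposition.transpose 0 k i + 1)))"
        using transpose_pairs_even[of k] transpose_pairs_odd[of k] unfolding \<tau>_def by (simp only: o_apply)
      also have "\<dots> = (\<Prod>i<Suc m. A (\<sigma> (2*i)) (\<sigma> (2*i+1)))"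
        using prod.permute[of "Transposition.transpose 0 k" "{..<Suc m}" "\<lambda>i. A (\<sigma> (2*i)) (\<sigma> (2*i+1))"] k
        by (simp add: permutes_swap_id o_def)
      finally show ?thesis .
    qed
    ultimately show ?thesis unfolding pairing_term_def by simp
  qed
  show ?thesis
    by (subst sum_permutations_compose_right[OF \<tau>_perm], rule sum.cong[OF refl])
      (use term_eq \<tau>_first_pair in auto)
qed

text \<open>Swapping the two entries of the first pair flips the sign and, by skew-symmetry, the first factor.\<close>
lemma sum_pairing_terms_0_in_first_pair:
  assumes skew: "\<And>i j. A i j = - A j i"
  shows "(\<Sum>\<sigma> | \<sigma> permutes {..<2*m+2}. if \<sigma> 0 = 0 \<or> \<sigma> 1 = 0 then pairing_term (Suc m) A \<sigma> else 0)
       = 2 * (\<Sum>\<sigma> | \<sigma> permutes {..<2*m+2}. if \<sigma> 0 = 0 then pairing_term (Suc m) A \<sigma> else 0)"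
proof -
  define t where "t = Transposition.transpose (0::nat) 1"
  have t_perm: "t permutes {..<2*m+2}" unfolding t_def by (intro permutes_swap_id) auto
  have split: "(if \<sigma> 0 = 0 \<or> \<sigma> 1 = 0 then pairing_term (Suc m) A \<sigma> else 0)
     = (if \<sigma> 0 = 0 then pairing_term (Suc m) A \<sigma> else 0) + (if \<sigma> 1 = 0 then pairing_term (Suc m) A \<sigma> else 0)"
    if p: "\<sigma> permutes {..<2*m+2}" for \<sigma>
  proof -
    have "\<not> (\<sigma> 0 = 0 \<and> \<sigma> 1 = 0)" using permutes_inj[OF p] by (metis injD zero_neq_one)
    then show ?thesis by auto
  qed
  have term_eq: "pairing_term (Suc m) A (\<sigma> \<circ> t) = pairing_term (Suc m) A \<sigma>"
    if p: "\<sigma> permutes {..<2*m+2}" for \<sigma>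
  proof -
    have "sign (\<sigma> \<circ> t) = - sign \<sigma>"
      by (subst sign_compose)
        (auto simp: t_def sign_swap_id intro: permutes_imp_permutation[OF _ p] permutation_swap_id)
    moreover have "(\<Prod>i<Suc m. A ((\<sigma> \<circ> t) (2*i)) ((\<sigma> \<circ> t) (2*i+1)))
        = - (\<Prod>i<Suc m. A (\<sigma> (2*i)) (\<sigma> (2*i+1)))"
      unfolding prod.lessThan_Suc_shift by (simp add: t_def skew[of "\<sigma> (Suc 0)" "\<sigma> 0"])
    ultimately show ?thesis unfolding pairing_term_def by simp
  qed
  have "(\<Sum>\<sigma> | \<sigma> permutes {..<2*m+2}. if \<sigma> 1 = 0 then pairing_term (Suc m) A \<sigma> else 0)
      = (\<Sum>\<sigma> | \<sigma> permutes {..<2*m+2}. if \<sigma> 0 = 0 then pairing_term (Suc m) A \<sigma> else 0)"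
    by (subst sum_permutations_compose_right[OF t_perm], rule sum.cong[OF refl])
      (use term_eq in \<open>auto simp: t_def\<close>)
  moreover have "(\<Sum>\<sigma> | \<sigma> permutes {..<2*m+2}. if \<sigma> 0 = 0 \<or> \<sigma> 1 = 0 then pairing_term (Suc m) A \<sigma> else 0)
     = (\<Sum>\<sigma> | \<sigma> permutes {..<2*m+2}. if \<sigma> 0 = 0 then pairing_term (Suc m) A \<sigma> else 0)
       + (\<Sum>\<sigma> | \<sigma> permutes {..<2*m+2}. if \<sigma> 1 = 0 then pairing_term (Suc m) A \<sigma> else 0)"
    by (subst sum.distrib[symmetric]) (rule sum.cong[OF refl], rule split, simp)
  ultimately show ?thesis by simp
qed

text \<open>Row \<open>k\<close> of a matrix of size \<open>n + 2\<close> with rows \<open>0\<close> and \<open>j\<close> deleted.\<close>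
definition minor_index :: "nat \<Rightarrow> nat \<Rightarrow> nat" where
  "minor_index j k = (if k + 2 \<le> j then k + 1 else k + 2)"

definition first_pair_perm :: "nat \<Rightarrow> nat \<Rightarrow> nat" where
  "first_pair_perm j k = (if k = 1 then j else if 2 \<le> k \<and> k \<le> j then k - 1 else k)"

definition first_pair_perm_inv :: "nat \<Rightarrow> nat \<Rightarrow> nat" where
  "first_pair_perm_inv j k = (if k = j then 1 else if 1 \<le> k \<and> k < j then k + 1 else k)"

definition shift_perm :: "nat \<Rightarrow> (nat \<Rightarrow> nat) \<Rightarrow> nat \<Rightarrow> nat" where
  "shift_perm n \<rho> = (\<lambda>x. if x \<in> {2..<n+2} then \<rho> (x - 2) + 2 else x)"

lemma minor_index_less_iff: "minor_index j a < minor_index j b \<longleftrightarrow> a < b"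
  by (simp add: minor_index_def)

lemma first_pair_perm_add_2: "first_pair_perm j (k + 2) = minor_index j k"
  by (simp add: first_pair_perm_def minor_index_def)

lemma first_pair_perm_inverse:
  "1 \<le> j \<Longrightarrow> first_pair_perm_inv j (first_pair_perm j x) = x"
  "1 \<le> j \<Longrightarrow> first_pair_perm j (first_pair_perm_inv j x) = x"
  by (auto simp: first_pair_perm_inv_def first_pair_perm_def)

lemma first_pair_perm_Suc:
  "1 \<le> j \<Longrightarrow> first_pair_perm (Suc j) = Transposition.transpose j (Suc j) \<circ> first_pair_perm j"
  by (rule ext) (auto simp: first_pair_perm_def Transposition.transpose_def)

lemma first_pair_perm_permutes:
  "1 \<le> j \<Longrightarrow> j < N \<Longrightarrow>
    first_pair_perm j permutes {..<N} \<and> sign (first_pair_perm j) = (-1)^(j-1)"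
proof (induction j rule: dec_induct)
  case base
  have "first_pair_perm 1 = id" by (rule ext) (auto simp: first_pair_perm_def)
  then show ?case using permutes_id[of "{..<N}"] by (simp add: id_def)
next
  case (step j)
  then have IH: "first_pair_perm j permutes {..<N}" "sign (first_pair_perm j) = (-1)^(j-1)" by auto
  have t: "Transposition.transpose j (Suc j) permutes {..<N}"
    using step by (intro permutes_swap_id) auto
  have "sign (Transposition.transpose j (Suc j) \<circ> first_pair_perm j) = - sign (first_pair_perm j)"
    by (subst sign_compose) (auto simp: sign_swap_id intro: permutation_swap_id permutes_imp_permutation[OF _ IH(1)])
  then have "sign (Transposition.transpose j (Suc j) \<circ> first_pair_perm j) = (-1) ^ (Suc j - 1)"
    using IH(2) step(1) by (cases j) auto
  then show ?case
    unfolding first_pair_perm_Suc[OF step(1)] using permutes_compose[OF IH(1) t] by blast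
qed

lemma shift_perm_permutes:
  assumes "\<rho> permutes {..<n}"
  shows "shift_perm n \<rho> permutes {..<n+2}" "sign (shift_perm n \<rho>) = sign \<rho>"
proof -
  interpret permutes_bij_finite \<rho> "{..<n}" "{2..<n+2}" "\<lambda>x. x+2" "\<lambda>x. x-2" "shift_perm n \<rho>"
  proof unfold_locales
    show "shift_perm n \<rho> \<equiv> \<lambda>x. if x \<in> {2..<n + 2} then \<rho> (x - 2) + 2 else x"
      by (simp add: shift_perm_def)
    show "bij_betw (\<lambda>x. x + 2) {..<n} {2..<n + 2}"
      by (rule bij_betw_byWitness[where f'="\<lambda>x. x - 2"]) auto
  qed (auto simp: assms)
  show "shift_perm n \<rho> permutes {..<n+2}"
    using permutes_p' by (rule permutes_subset) auto
  show "sign (shift_perm n \<rho>) = sign \<rho>"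
    using sign_p' .
qed

definition minor_perm :: "nat \<Rightarrow> nat \<Rightarrow> (nat \<Rightarrow> nat) \<Rightarrow> nat \<Rightarrow> nat" where
  "minor_perm n j \<sigma> k = (if k < n then first_pair_perm_inv j (\<sigma> (k+2)) - 2 else k)"

lemma minor_perm_first_pair_perm:
  assumes "1 \<le> j" "\<rho> permutes {..<n}"
  shows "minor_perm n j (first_pair_perm j \<circ> shift_perm n \<rho>) = \<rho>"
proof
  fix k show "minor_perm n j (first_pair_perm j \<circ> shift_perm n \<rho>) k = \<rho> k"
    using permutes_in_image[OF assms(2), of k] permutes_not_in[OF assms(2), of k] assms(1)
    by (simp add: minor_perm_def shift_perm_def first_pair_perm_inverse)
qed

context
  fixes n j :: nat and \<sigma> :: "nat \<Rightarrow> nat"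
  assumes j: "1 \<le> j" "j \<le> n + 1"
    and \<sigma>: "\<sigma> permutes {..<n+2}" "\<sigma> 0 = 0" "\<sigma> 1 = j"
begin

lemma first_pair_perm_inv_bounds:
  assumes "2 \<le> x" "x < n+2"
  shows "2 \<le> first_pair_perm_inv j (\<sigma> x)" "first_pair_perm_inv j (\<sigma> x) < n+2"
proof -
  have "\<sigma> x \<noteq> \<sigma> 0" "\<sigma> x \<noteq> \<sigma> 1" "\<sigma> x < n+2"
    using permutes_inj[OF \<sigma>(1)] permutes_in_image[OF \<sigma>(1)] assms by (auto dest: injD)
  then show "2 \<le> first_pair_perm_inv j (\<sigma> x)" "first_pair_perm_inv j (\<sigma> x) < n+2"
    using j \<sigma>(2,3) unfolding first_pair_perm_inv_def by auto
qed

lemma first_pair_perm_minor_perm: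
  "first_pair_perm j \<circ> shift_perm n (minor_perm n j \<sigma>) = \<sigma>"
proof (rule ext)
  fix x
  consider "x = 0" | "x = 1" | y where "x = y + 2" "y < n" | "n+2 \<le> x"
    by (metis One_nat_def add.commute add_2_eq_Suc le_Suc_ex less_2_cases not_less add_less_cancel_left)
  then show "(first_pair_perm j \<circ> shift_perm n (minor_perm n j \<sigma>)) x = \<sigma> x"
  proof cases
    case (3 y)
    then have "minor_perm n j \<sigma> y + 2 = first_pair_perm_inv j (\<sigma> x)"
      using first_pair_perm_inv_bounds[of x] by (simp add: minor_perm_def)
    then show ?thesis using 3 j by (simp add: shift_perm_def first_pair_perm_inverse)
  next
    case 4
    then show ?thesis using permutes_not_in[OF \<sigma>(1), of x] j
      by (simp add: shift_perm_def first_pair_perm_def)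
  qed (use \<sigma>(2,3) in \<open>simp_all add: shift_perm_def first_pair_perm_def\<close>)
qed

lemma minor_perm_permutes: "minor_perm n j \<sigma> permutes {..<n}"
proof (rule bij_imp_permutes)
  have "minor_perm n j \<sigma> k < n" if "k < n" for k
    using first_pair_perm_inv_bounds[of "k+2"] that by (simp add: minor_perm_def; linarith)
  then have image: "minor_perm n j \<sigma> ` {..<n} \<subseteq> {..<n}" by auto
  moreover have "inj_on (minor_perm n j \<sigma>) {..<n}"
  proof (rule inj_onI)
    fix k l assume "k \<in> {..<n}" "l \<in> {..<n}" "minor_perm n j \<sigma> k = minor_perm n j \<sigma> l"
    then have "first_pair_perm_inv j (\<sigma> (k+2)) = first_pair_perm_inv j (\<sigma> (l+2))"
      using first_pair_perm_inv_bounds[of "k+2"] first_pair_perm_inv_bounds[of "l+2"]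
      by (simp add: minor_perm_def)
    then have "\<sigma> (k+2) = \<sigma> (l+2)" by (metis first_pair_perm_inverse(2)[OF j(1)])
    then show "k = l" using permutes_inj[OF \<sigma>(1)] by (simp add: inj_eq)
  qed
  ultimately show "bij_betw (minor_perm n j \<sigma>) {..<n} {..<n}"
    using endo_inj_surj[OF finite_lessThan image] by (simp add: bij_betw_def)
  show "minor_perm n j \<sigma> x = x" if "x \<notin> {..<n}" for x
    using that by (simp add: minor_perm_def)
qed

end

lemma bij_betw_permutes_first_pair:
  assumes j: "1 \<le> j" "j \<le> n + 1"
  shows "bij_betw (\<lambda>\<rho>. first_pair_perm j \<circ> shift_perm n \<rho>) {\<rho>. \<rho> permutes {..<n}}
           {\<sigma>. \<sigma> permutes {..<n+2} \<and> \<sigma> 0 = 0 \<and> \<sigma> 1 = j}"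
proof (rule bij_betw_byWitness[where f'="minor_perm n j"])
  have "first_pair_perm j permutes {..<n+2}"
    using first_pair_perm_permutes[of j "n+2"] j by simp
  then have "first_pair_perm j \<circ> shift_perm n \<rho> permutes {..<n+2}" if "\<rho> permutes {..<n}" for \<rho>
    using permutes_compose[OF shift_perm_permutes(1)[OF that]] by blast
  moreover have "(first_pair_perm j \<circ> shift_perm n \<rho>) 0 = 0" "(first_pair_perm j \<circ> shift_perm n \<rho>) 1 = j" for \<rho>
    by (simp_all add: shift_perm_def first_pair_perm_def)
  ultimately show "(\<lambda>\<rho>. first_pair_perm j \<circ> shift_perm n \<rho>) ` {\<rho>. \<rho> permutes {..<n}}
      \<subseteq> {\<sigma>. \<sigma> permutes {..<n+2} \<and> \<sigma> 0 = 0 \<and> \<sigma> 1 = j}"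
    by (intro image_subsetI CollectI conjI) simp_all
  show "\<forall>\<rho>\<in>{\<rho>. \<rho> permutes {..<n}}. minor_perm n j (first_pair_perm j \<circ> shift_perm n \<rho>) = \<rho>"
    using minor_perm_first_pair_perm[OF j(1)] by blast
  show "\<forall>\<sigma>\<in>{\<sigma>. \<sigma> permutes {..<n+2} \<and> \<sigma> 0 = 0 \<and> \<sigma> 1 = j}.
      first_pair_perm j \<circ> shift_perm n (minor_perm n j \<sigma>) = \<sigma>"
    using first_pair_perm_minor_perm[OF j] by blast
  show "minor_perm n j ` {\<sigma>. \<sigma> permutes {..<n+2} \<and> \<sigma> 0 = 0 \<and> \<sigma> 1 = j} \<subseteq> {\<rho>. \<rho> permutes {..<n}}"
    using minor_perm_permutes[OF j] by blast
qed

lemma pairing_term_first_pair: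
  assumes j: "1 \<le> j" "j \<le> 2*m+1" and p: "\<rho> permutes {..<2*m}"
  shows "pairing_term (Suc m) A (first_pair_perm j \<circ> shift_perm (2*m) \<rho>)
       = (-1)^(j-1) * A 0 j * pairing_term m (\<lambda>a b. A (minor_index j a) (minor_index j b)) \<rho>"
proof -
  let ?\<sigma> = "first_pair_perm j \<circ> shift_perm (2*m) \<rho>"
  have "first_pair_perm j permutes {..<2*m+2}" "sign (first_pair_perm j) = (-1)^(j-1)"
    using first_pair_perm_permutes[of j "2*m+2"] j by auto
  then have sign: "sign ?\<sigma> = (-1)^(j-1) * sign \<rho>"
    using shift_perm_permutes[OF p] permutes_imp_permutation[OF finite_lessThan]
    by (subst sign_compose) auto
  have first_pair: "?\<sigma> 0 = 0" "?\<sigma> 1 = j"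
    by (simp_all add: shift_perm_def first_pair_perm_def)
  have other_pairs: "(\<Prod>i<m. A (?\<sigma> (2 * Suc i)) (?\<sigma> (2 * Suc i + 1)))
      = (\<Prod>i<m. A (minor_index j (\<rho> (2*i))) (minor_index j (\<rho> (2*i+1))))"
  proof (rule prod.cong[OF refl])
    fix i assume "i \<in> {..<m}"
    then have "\<rho> (2*i) < 2*m" "\<rho> (2*i+1) < 2*m" "2*i < 2*m" "2*i+1 < 2*m"
      using permutes_in_image[OF p] by auto
    then show "A (?\<sigma> (2 * Suc i)) (?\<sigma> (2 * Suc i + 1))
        = A (minor_index j (\<rho> (2*i))) (minor_index j (\<rho> (2*i+1)))"
      by (simp add: shift_perm_def first_pair_perm_add_2[symmetric] add.commute)
  qed
  have "pairing_term (Suc m) A ?\<sigma>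
      = of_int (sign ?\<sigma>) * (A (?\<sigma> 0) (?\<sigma> 1) * (\<Prod>i<m. A (?\<sigma> (2 * Suc i)) (?\<sigma> (2 * Suc i + 1))))"
    unfolding pairing_term_def by (subst prod.lessThan_Suc_shift) simp
  then show ?thesis
    unfolding sign first_pair other_pairs pairing_term_def by simp
qed

lemma sum_pairing_terms_first_pair:
  assumes j: "1 \<le> j" "j \<le> 2*m+1"
  shows "(\<Sum>\<sigma> | \<sigma> permutes {..<2*m+2}. if \<sigma> 0 = 0 \<and> \<sigma> 1 = j then pairing_term (Suc m) A \<sigma> else 0)
     = (-1)^(j-1) * A 0 j * pfaffian_sum (2*m) (\<lambda>a b. A (minor_index j a) (minor_index j b))"
proof -
  have "(\<Sum>\<sigma> | \<sigma> permutes {..<2*m+2}. if \<sigma> 0 = 0 \<and> \<sigma> 1 = j then pairing_term (Suc m) A \<sigma> else 0)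
      = (\<Sum>\<sigma> \<in> {\<sigma>. \<sigma> permutes {..<2*m+2} \<and> \<sigma> 0 = 0 \<and> \<sigma> 1 = j}. pairing_term (Suc m) A \<sigma>)"
    by (subst sum.inter_filter[symmetric]) (auto simp: finite_permutations)
  also have "\<dots> = (\<Sum>\<rho> | \<rho> permutes {..<2*m}. pairing_term (Suc m) A (first_pair_perm j \<circ> shift_perm (2*m) \<rho>))"
    using sum.reindex_bij_betw[OF bij_betw_permutes_first_pair[of j "2*m"], of "pairing_term (Suc m) A"] j
    by simp
  also have "\<dots> = (-1)^(j-1) * A 0 j * pfaffian_sum (2*m) (\<lambda>a b. A (minor_index j a) (minor_index j b))"
    unfolding pfaffian_sum_def sum_distrib_left using j
    by (intro sum.cong) (simp_all add: pairing_term_first_pair)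
  finally show ?thesis .
qed

lemma pfaffian_sum_expand_first_row:
  assumes skew: "\<And>i j. A i j = - A j i"
  shows "pfaffian_sum (2*m+2) A = 2 * (real m + 1) *
    (\<Sum>j\<in>{1..2*m+1}. (-1)^(j-1) * A 0 j * pfaffian_sum (2*m) (\<lambda>a b. A (minor_index j a) (minor_index j b)))"
proof -
  let ?T = "pairing_term (Suc m) A"
  have "pfaffian_sum (2*m+2) A
      = (\<Sum>k<Suc m. \<Sum>\<sigma> | \<sigma> permutes {..<2*m+2}. if \<sigma> (2*k) = 0 \<or> \<sigma> (2*k+1) = 0 then ?T \<sigma> else 0)"
  proof -
    have "(2*m+2) div 2 = Suc m" by simp
    then show ?thesis unfolding pfaffian_sum_def by (simp only: sum_permutations_by_pair_of_0[of ?T m])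
  qed
  also have "\<dots> = (\<Sum>k<Suc m. \<Sum>\<sigma> | \<sigma> permutes {..<2*m+2}. if \<sigma> 0 = 0 \<or> \<sigma> 1 = 0 then ?T \<sigma> else 0)"
    by (rule sum.cong[OF refl]) (rule sum_pairing_terms_pair_of_0, simp)
  also have "\<dots> = (real m + 1) * (\<Sum>\<sigma> | \<sigma> permutes {..<2*m+2}. if \<sigma> 0 = 0 \<or> \<sigma> 1 = 0 then ?T \<sigma> else 0)"
    by simp
  also have "\<dots> = (real m + 1) * (2 * (\<Sum>j\<in>{1..2*m+1}.
      \<Sum>\<sigma> | \<sigma> permutes {..<2*m+2}. if \<sigma> 0 = 0 \<and> \<sigma> 1 = j then ?T \<sigma> else 0))"
    by (simp only: sum_pairing_terms_0_in_first_pair[OF skew] sum_permutations_by_image_of_1[of ?T])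
  also have "\<dots> = (real m + 1) * (2 * (\<Sum>j\<in>{1..2*m+1}.
      (-1)^(j-1) * A 0 j * pfaffian_sum (2*m) (\<lambda>a b. A (minor_index j a) (minor_index j b))))"
    by (subst sum.cong[OF refl sum_pairing_terms_first_pair]) auto
  finally show ?thesis by (simp only: mult_ac)
qed

lemma pfaffian_expand_first_row:
  assumes skew: "\<And>i j. A i j = - A j i"
  shows "pfaffian (n+2) A =
    (\<Sum>j\<in>{1..n+1}. (-1)^(j-1) * A 0 j * pfaffian n (\<lambda>a b. A (minor_index j a) (minor_index j b)))"
proof (cases "odd n")
  case True
  then show ?thesis by (simp add: pfaffian_def)
next
  case False
  then obtain m where n: "n = 2*m" by (metis evenE)
  have denominator: "(2::real)^(m+1) * fact (m+1) = (2 * (real m + 1)) * (2^m * fact m)"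
    by (simp add: fact_Suc algebra_simps)
  have norm: "2 * (real m + 1) / (2^(m+1) * fact (m+1)) = 1 / (2^m * fact m)"
    unfolding denominator by simp
  have lhs: "pfaffian (n+2) A = pfaffian_sum (2*m+2) A / (2^(m+1) * fact (m+1))"
    using pfaffian_eq_pfaffian_sum[of "2*m+2" A] n by simp
  have minors: "pfaffian (2*m) B = pfaffian_sum (2*m) B / (2^m * fact m)" for B
    using pfaffian_eq_pfaffian_sum[of "2*m" B] by simp
  have "pfaffian (n+2) A = (\<Sum>j\<in>{1..2*m+1}. (-1)^(j-1) * A 0 j
      * pfaffian_sum (2*m) (\<lambda>a b. A (minor_index j a) (minor_index j b)))
      * (2 * (real m + 1) / (2^(m+1) * fact (m+1)))"
    unfolding lhs pfaffian_sum_expand_first_row[OF skew] by simp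
  then have "pfaffian (n+2) A = (\<Sum>j\<in>{1..2*m+1}. (-1)^(j-1) * A 0 j
      * pfaffian_sum (2*m) (\<lambda>a b. A (minor_index j a) (minor_index j b)) / (2^m * fact m))"
    unfolding norm sum_divide_distrib[symmetric] by simp
  then show ?thesis unfolding n minors by simp
qed

section \<open>Momenta\<close>

lemma ns_momenta_uminus: "p \<in> ns_momenta L \<Longrightarrow> - p \<in> ns_momenta L"
proof -
  assume "p \<in> ns_momenta L"
  then obtain n :: int where n: "p = 2 * pi * (real_of_int n + 1/2) / real L"
    unfolding ns_momenta_def by auto
  have "real_of_int (- n - 1) + 1/2 = - (real_of_int n + 1/2)" by simp
  then have "- p = 2 * pi * (real_of_int (- n - 1) + 1/2) / real L"
    unfolding n by (simp only: minus_divide_left mult_minus_right)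
  then show ?thesis unfolding ns_momenta_def by blast
qed

lemma ns_momenta_nonzero: "0 < L \<Longrightarrow> p \<in> ns_momenta L \<Longrightarrow> p \<noteq> 0"
proof -
  assume L: "0 < L" and "p \<in> ns_momenta L"
  then obtain n :: int where n: "p = 2 * pi * (real_of_int n + 1/2) / real L"
    unfolding ns_momenta_def by auto
  have "2*n + 1 \<noteq> 0" by presburger
  then have "real_of_int (2*n + 1) \<noteq> 0" unfolding of_int_eq_0_iff .
  then have "real_of_int n + 1/2 \<noteq> 0" by simp
  then show ?thesis unfolding n using L by simp
qed

lemma all_momenta_cases:
  assumes "0 < L" "p \<in> all_momenta L"
  obtains "0 < p" "p \<in> pos_momenta L" | "p < 0" "- p \<in> pos_momenta L"
proof -
  have "p \<noteq> 0" using ns_momenta_nonzero assms unfolding all_momenta_def by auto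
  then show ?thesis
    using that assms ns_momenta_uminus[of p L] unfolding all_momenta_def pos_momenta_def by fastforce
qed

lemma pos_momenta_subset_all_momenta:
  "p \<in> pos_momenta L \<Longrightarrow> p \<in> all_momenta L" "p \<in> pos_momenta L \<Longrightarrow> - p \<in> all_momenta L"
  using ns_momenta_uminus[of p L] unfolding all_momenta_def pos_momenta_def by auto

lemma all_momenta_eq:
  assumes "0 < L" shows "all_momenta L = pos_momenta L \<union> uminus ` pos_momenta L"
proof
  show "all_momenta L \<subseteq> pos_momenta L \<union> uminus ` pos_momenta L"
  proof
    fix p assume "p \<in> all_momenta L"
    show "p \<in> pos_momenta L \<union> uminus ` pos_momenta L"
      by (rule all_momenta_cases[OF assms \<open>p \<in> all_momenta L\<close>]) (auto intro: image_eqI[of p uminus "- p"])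
  qed
  show "pos_momenta L \<union> uminus ` pos_momenta L \<subseteq> all_momenta L"
    using pos_momenta_subset_all_momenta by auto
qed

lemma finite_all_momenta: "0 < L \<Longrightarrow> finite (all_momenta L)"
proof -
  assume L: "0 < L"
  have "all_momenta L \<subseteq> (\<lambda>n::int. 2 * pi * (real_of_int n + 1/2) / real L) ` {-int L..int L}"
  proof
    fix p assume "p \<in> all_momenta L"
    then obtain n :: int where n: "p = 2 * pi * (real_of_int n + 1/2) / real L" and "- pi < p" "p < pi"
      unfolding all_momenta_def ns_momenta_def by auto
    then have "pi * (- real L) < pi * (2 * (real_of_int n + 1/2))" "pi * (2 * (real_of_int n + 1/2)) < pi * real L"
      using L by (simp_all add: less_divide_eq divide_less_eq algebra_simps)
    then have "- real L < 2 * (real_of_int n + 1/2)" "2 * (real_of_int n + 1/2) < real L"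
      using pi_gt_zero by (simp_all only: mult_less_cancel_left_pos)
    then have "- real L < 2 * real_of_int n + 1" "2 * real_of_int n + 1 < real L"
      by (simp_all add: algebra_simps)
    moreover have "1 \<le> real L" using L by simp
    ultimately have "- real L \<le> real_of_int n" "real_of_int n \<le> real L"
      by linarith+
    then have "real_of_int (- int L) \<le> real_of_int n" "real_of_int n \<le> real_of_int (int L)"
      by (simp_all only: of_int_minus of_int_of_nat_eq)
    then have "- int L \<le> n" "n \<le> int L" by (simp_all only: of_int_le_iff)
    then show "p \<in> (\<lambda>n::int. 2 * pi * (real_of_int n + 1/2) / real L) ` {-int L..int L}"
      using n by auto
  qed
  then show ?thesis by (rule finite_subset) simp
qed

lemma finite_pos_momenta: "0 < L \<Longrightarrow> finite (pos_momenta L)"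
  using finite_all_momenta by (rule finite_subset[rotated]) (use pos_momenta_subset_all_momenta in auto)

section \<open>Lists and products in a non-commutative algebra\<close>

definition remove_nth :: "nat \<Rightarrow> 'b list \<Rightarrow> 'b list" where
  "remove_nth j xs = take j xs @ drop (Suc j) xs"

lemma remove_nth_Cons_0 [simp]: "remove_nth 0 (y # ys) = ys"
  by (simp add: remove_nth_def)

lemma remove_nth_Cons_Suc [simp]: "remove_nth (Suc j) (y # ys) = y # remove_nth j ys"
  by (simp add: remove_nth_def)

lemma length_remove_nth: "j < length xs \<Longrightarrow> length (remove_nth j xs) = length xs - 1"
  by (simp add: remove_nth_def)

lemma set_remove_nth_subset: "set (remove_nth j xs) \<subseteq> set xs"
  unfolding remove_nth_def using set_take_subset set_drop_subset by fastforce

lemma nth_remove_nth: "j < length xs \<Longrightarrow> a < length xs - 1 \<Longrightarrow>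
   remove_nth j xs ! a = (if a < j then xs ! a else xs ! Suc a)"
  by (simp add: remove_nth_def nth_append min_def)

lemma commute_prod_list:
  fixes x :: "'a::monoid_mult"
  assumes "\<And>y. y \<in> set ys \<Longrightarrow> x * y = y * x"
  shows "x * prod_list ys = prod_list ys * x"
  using assms
proof (induction ys)
  case (Cons y ys)
  have "x * prod_list (y # ys) = y * (x * prod_list ys)"
    using Cons.prems by (simp add: mult.assoc[symmetric])
  also have "\<dots> = prod_list (y # ys) * x"
    using Cons by (simp add: mult.assoc)
  finally show ?case .
qed simp

lemma prod_list_map_mult_commuting:
  fixes w v :: "nat \<Rightarrow> 'a::monoid_mult"
  assumes "\<And>i j. i < m \<Longrightarrow> j < m \<Longrightarrow> w i * v j = v j * w i"
  shows "prod_list (map (\<lambda>i. w i * v i) [0..<m]) = prod_list (map w [0..<m]) * prod_list (map v [0..<m])"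
  using assms
proof (induction m)
  case (Suc m)
  have "w m * prod_list (map v [0..<m]) = prod_list (map v [0..<m]) * w m"
    using Suc.prems by (intro commute_prod_list) auto
  moreover have "prod_list (map (\<lambda>i. w i * v i) [0..<m]) = prod_list (map w [0..<m]) * prod_list (map v [0..<m])"
    using Suc by simp
  ultimately show ?case
    by (simp add: mult.assoc) (simp add: mult.assoc[symmetric])
qed simp

lemma prod_list_map_scaleR:
  fixes h :: "nat \<Rightarrow> 'a::real_algebra_1"
  shows "prod_list (map (\<lambda>i. r *\<^sub>R h i) xs) = (r ^ length xs) *\<^sub>R prod_list (map h xs)"
  by (induction xs) (simp_all add: mult_scaleR_left mult_scaleR_right)

text \<open>The non-commutative version of \<open>prod_sum_PiE\<close>.\<close>
lemma prod_list_sum_PiE: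
  fixes F :: "nat \<Rightarrow> 'b \<Rightarrow> 'a::semiring_1"
  assumes S: "finite S"
  shows "prod_list (map (\<lambda>i. \<Sum>x\<in>S. F i x) [0..<m])
     = (\<Sum>p\<in>PiE {..<m} (\<lambda>_. S). prod_list (map (\<lambda>i. F i (p i)) [0..<m]))"
proof (induction m)
  case (Suc m)
  have update: "prod_list (map (\<lambda>i. F i ((p(m := y)) i)) [0..<Suc m])
      = prod_list (map (\<lambda>i. F i (p i)) [0..<m]) * F m y" for p y
  proof -
    have map_eq: "map (\<lambda>i. F i ((p(m := y)) i)) [0..<m] = map (\<lambda>i. F i (p i)) [0..<m]"
      by (rule map_cong) auto
    have "prod_list (map (\<lambda>i. F i ((p(m := y)) i)) [0..<Suc m])
        = prod_list (map (\<lambda>i. F i ((p(m := y)) i)) [0..<m]) * F m y"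
      by simp
    then show ?thesis unfolding map_eq .
  qed
  have "prod_list (map (\<lambda>i. \<Sum>x\<in>S. F i x) [0..<Suc m])
      = (\<Sum>p\<in>PiE {..<m} (\<lambda>_. S). \<Sum>y\<in>S. prod_list (map (\<lambda>i. F i (p i)) [0..<m]) * F m y)"
    using Suc by (simp add: sum_distrib_left sum_distrib_right) (rule sum.swap)
  also have "\<dots> = (\<Sum>(y, p)\<in>S \<times> PiE {..<m} (\<lambda>_. S). prod_list (map (\<lambda>i. F i ((p(m := y)) i)) [0..<Suc m]))"
    unfolding update by (subst sum.swap) (simp add: sum.cartesian_product)
  also have "\<dots> = (\<Sum>p\<in>(\<lambda>(y, p). p(m := y)) ` (S \<times> PiE {..<m} (\<lambda>_. S)). prod_list (map (\<lambda>i. F i (p i)) [0..<Suc m]))"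
    using inj_combinator[of m "{..<m}" "\<lambda>_. S"] by (subst sum.reindex) (auto simp: case_prod_unfold)
  also have "(\<lambda>(y, p). p(m := y)) ` (S \<times> PiE {..<m} (\<lambda>_. S)) = PiE {..<Suc m} (\<lambda>_. S)"
    using PiE_insert_eq[of m "{..<m}" "\<lambda>_. S"] by (simp add: lessThan_Suc)
  finally show ?case .
qed simp

section \<open>Wick's theorem in the ghost vacuum\<close>

lemma add_self_eq_0_real_vector: "(x::'a::real_vector) + x = 0 \<Longrightarrow> x = 0"
  by (metis scaleR_2 scaleR_eq_0_iff zero_neq_numeral)

definition contraction_matrix :: "real list \<Rightarrow> nat \<Rightarrow> nat \<Rightarrow> real" where
  "contraction_matrix ps = skew_upper (\<lambda>i j. heaviside (ps ! i) * kdelta (ps ! i) (- (ps ! j)))"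

lemma contraction_matrix_skew: "contraction_matrix ps i j = - contraction_matrix ps j i"
  by (simp add: contraction_matrix_def skew_upper_def)

lemma contraction_matrix_minor:
  assumes j: "1 \<le> j" "j \<le> length xs" and ab: "a < length xs - 1" "b < length xs - 1"
  shows "contraction_matrix (x # xs) (minor_index j a) (minor_index j b)
       = contraction_matrix (remove_nth (j - 1) xs) a b"
proof -
  have "(x # xs) ! minor_index j a = remove_nth (j - 1) xs ! a" if "a < length xs - 1" for a
    using that j by (auto simp: minor_index_def nth_remove_nth)
  then show ?thesis
    using ab by (simp add: contraction_matrix_def skew_upper_def minor_index_less_iff)
qed

lemma pfaffian_contraction_matrix_Cons:
  "pfaffian (length (x # xs)) (contraction_matrix (x # xs))
     = (\<Sum>j<length xs. (-1)^j * (heaviside x * kdelta x (- (xs ! j)))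
         * pfaffian (length (remove_nth j xs)) (contraction_matrix (remove_nth j xs)))"
proof (cases xs)
  case Nil
  then show ?thesis by (simp add: pfaffian_def)
next
  case (Cons y zs)
  have "pfaffian (length zs + 2) (contraction_matrix (x # xs)) =
      (\<Sum>j\<in>{1..length zs + 1}. (-1)^(j-1) * contraction_matrix (x # xs) 0 j
        * pfaffian (length zs) (\<lambda>a b. contraction_matrix (x # xs) (minor_index j a) (minor_index j b)))"
    by (rule pfaffian_expand_first_row) (rule contraction_matrix_skew)
  also have "\<dots> = (\<Sum>j\<in>{1..length xs}. (-1)^(j-1) * (heaviside x * kdelta x (- (xs ! (j - 1))))
      * pfaffian (length (remove_nth (j-1) xs)) (contraction_matrix (remove_nth (j-1) xs)))"
  proof (rule sum.cong)
    fix j assume j: "j \<in> {1..length xs}"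
    then have "j - 1 < length xs" by auto
    then have "length (remove_nth (j-1) xs) = length zs"
      using Cons length_remove_nth[of "j-1" xs] by simp
    moreover have "pfaffian (length zs) (\<lambda>a b. contraction_matrix (x # xs) (minor_index j a) (minor_index j b))
        = pfaffian (length zs) (contraction_matrix (remove_nth (j-1) xs))"
      by (rule pfaffian_cong) (use j Cons in \<open>simp add: contraction_matrix_minor\<close>)
    moreover have "contraction_matrix (x # xs) 0 j = heaviside x * kdelta x (- (xs ! (j - 1)))"
      using j by (simp add: contraction_matrix_def skew_upper_def)
    ultimately show "(-1)^(j-1) * contraction_matrix (x # xs) 0 j
        * pfaffian (length zs) (\<lambda>a b. contraction_matrix (x # xs) (minor_index j a) (minor_index j b))
      = (-1)^(j-1) * (heaviside x * kdelta x (- (xs ! (j - 1))))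
        * pfaffian (length (remove_nth (j-1) xs)) (contraction_matrix (remove_nth (j-1) xs))"
      by simp
  qed (simp add: Cons)
  also have "\<dots> = (\<Sum>j<length xs. (-1)^j * (heaviside x * kdelta x (- (xs ! j)))
      * pfaffian (length (remove_nth j xs)) (contraction_matrix (remove_nth j xs)))"
    by (simp add: sum.atLeast1_atMost_eq)
  finally show ?thesis using Cons by simp
qed

locale ghost_modes =
  fixes L :: nat and g :: "real \<Rightarrow> 'a::real_algebra_1" and adj :: "'a \<Rightarrow> 'a"
  assumes L_pos: "0 < L"
    and adj: "is_adjoint adj"
    and car_gg: "\<And>p q. p \<in> pos_momenta L \<Longrightarrow> q \<in> pos_momenta L \<Longrightarrow>
                   g p * g q + g q * g p = 0"
    and car_ggd: "\<And>p q. p \<in> pos_momenta L \<Longrightarrow> q \<in> pos_momenta L \<Longrightarrow>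
                   g p * adj (g q) + adj (g q) * g p = (if p = q then 1 else 0)"
begin

abbreviation "pos \<equiv> pos_momenta L"
abbreviation "all \<equiv> all_momenta L"
abbreviation "G0 \<equiv> ghost_vacuum L g adj"

lemma adj_add: "adj (x + y) = adj x + adj y"
  using adj unfolding is_adjoint_def by blast

lemma adj_mult: "adj (x * y) = adj y * adj x"
  using adj unfolding is_adjoint_def by blast

lemma adj_0: "adj 0 = 0"
  using adj_add[of 0 0] by simp

lemma ghost_square: "q \<in> pos \<Longrightarrow> g q * g q = 0"
  using car_gg[of q q] add_self_eq_0_real_vector by blast

lemma ghost_adj_square: "q \<in> pos \<Longrightarrow> adj (g q) * adj (g q) = 0"
  using arg_cong[OF ghost_square, of q adj] by (simp add: adj_mult adj_0)

lemma ghost_anticommute: "p \<in> pos \<Longrightarrow> q \<in> pos \<Longrightarrow> g p * g q = - (g q * g p)"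
  using car_gg[of p q] by (simp only: add_eq_0_iff2)

lemma ghost_adj_anticommute: "p \<in> pos \<Longrightarrow> q \<in> pos \<Longrightarrow> adj (g p) * adj (g q) = - (adj (g q) * adj (g p))"
  using arg_cong[OF car_gg[of q p], of adj] by (simp add: adj_add adj_mult adj_0 add_eq_0_iff2)

lemma ghost_anticommute_adj:
  "p \<in> pos \<Longrightarrow> q \<in> pos \<Longrightarrow> p \<noteq> q \<Longrightarrow> g p * adj (g q) = - (adj (g q) * g p)"
  using car_ggd[of p q] by (simp add: add_eq_0_iff2)

definition vacuum_factor :: "real \<Rightarrow> 'a" where
  "vacuum_factor k = g k * adj (g k)"

lemma ghost_commute_vacuum_factor:
  assumes "k \<in> pos" "q \<in> pos" "k \<noteq> q"
  shows "g q * vacuum_factor k = vacuum_factor k * g q"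
    and "adj (g q) * vacuum_factor k = vacuum_factor k * adj (g q)"
proof -
  have "g q * vacuum_factor k = - (g k * (g q * adj (g k)))"
    using ghost_anticommute[of q k] assms by (simp add: vacuum_factor_def mult.assoc[symmetric])
  also have "\<dots> = vacuum_factor k * g q"
    using ghost_anticommute_adj[of q k] assms by (simp add: vacuum_factor_def mult.assoc)
  finally show "g q * vacuum_factor k = vacuum_factor k * g q" .
  have "adj (g q) * vacuum_factor k = - (g k * (adj (g q) * adj (g k)))"
    using ghost_anticommute_adj[of k q] assms by (simp add: vacuum_factor_def mult.assoc[symmetric])
  also have "\<dots> = vacuum_factor k * adj (g q)"
    using ghost_adj_anticommute[of q k] assms by (simp add: vacuum_factor_def mult.assoc)
  finally show "adj (g q) * vacuum_factor k = vacuum_factor k * adj (g q)" .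
qed

lemma vacuum_factor_commute:
  assumes "k \<in> pos" "q \<in> pos"
  shows "vacuum_factor q * vacuum_factor k = vacuum_factor k * vacuum_factor q"
proof (cases "k = q")
  case False
  have "vacuum_factor q * vacuum_factor k = g q * (adj (g q) * vacuum_factor k)"
    by (simp add: vacuum_factor_def mult.assoc)
  also have "\<dots> = (g q * vacuum_factor k) * adj (g q)"
    using ghost_commute_vacuum_factor(2)[OF assms False] by (simp add: mult.assoc)
  also have "\<dots> = vacuum_factor k * vacuum_factor q"
    using ghost_commute_vacuum_factor(1)[OF assms False] by (simp add: vacuum_factor_def mult.assoc)
  finally show ?thesis .
qed simp

lemma vacuum_factor_idem: "q \<in> pos \<Longrightarrow> vacuum_factor q * vacuum_factor q = vacuum_factor q"
proof -
  assume q: "q \<in> pos"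
  have "adj (g q) * g q = 1 - g q * adj (g q)"
    using car_ggd[of q q] q by (simp add: eq_diff_eq add.commute)
  moreover have "vacuum_factor q * vacuum_factor q = g q * (adj (g q) * g q) * adj (g q)"
    by (simp add: vacuum_factor_def mult.assoc)
  ultimately have "vacuum_factor q * vacuum_factor q = g q * (1 - g q * adj (g q)) * adj (g q)"
    by simp
  also have "\<dots> = vacuum_factor q"
    using ghost_square[OF q] by (simp add: vacuum_factor_def algebra_simps mult.assoc[symmetric])
  finally show ?thesis .
qed

lemma ghost_vacuum_eq: "G0 = prod_list (map vacuum_factor (sorted_list_of_set pos))"
  unfolding ghost_vacuum_def vacuum_factor_def ..

lemma sorted_list_of_pos: "set (sorted_list_of_set pos) = pos" "distinct (sorted_list_of_set pos)"
  using finite_pos_momenta[OF L_pos] by auto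

lemma ghost_mul_vacuum: "q \<in> pos \<Longrightarrow> g q * G0 = 0"
proof -
  assume q: "q \<in> pos"
  then obtain us vs where s: "sorted_list_of_set pos = us @ q # vs"
    using sorted_list_of_pos(1) by (metis split_list)
  have "q \<notin> set us" "set us \<subseteq> pos" using sorted_list_of_pos s by auto
  then have "g q * prod_list (map vacuum_factor us) = prod_list (map vacuum_factor us) * g q"
    using q by (intro commute_prod_list) (auto intro: ghost_commute_vacuum_factor)
  then have "g q * G0 = prod_list (map vacuum_factor us) * (g q * vacuum_factor q) * prod_list (map vacuum_factor vs)"
    unfolding ghost_vacuum_eq s by (simp add: mult.assoc[symmetric])
  then show ?thesis using ghost_square[OF q] by (simp add: vacuum_factor_def mult.assoc[symmetric])
qed

lemma vacuum_mul_ghost_adj: "q \<in> pos \<Longrightarrow> G0 * adj (g q) = 0"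
proof -
  assume q: "q \<in> pos"
  then obtain us vs where s: "sorted_list_of_set pos = us @ q # vs"
    using sorted_list_of_pos(1) by (metis split_list)
  have "q \<notin> set vs" "set vs \<subseteq> pos" using sorted_list_of_pos s by auto
  then have "adj (g q) * prod_list (map vacuum_factor vs) = prod_list (map vacuum_factor vs) * adj (g q)"
    using q by (intro commute_prod_list) (auto intro: ghost_commute_vacuum_factor)
  then have "G0 * adj (g q) = prod_list (map vacuum_factor us) * (vacuum_factor q * adj (g q)) * prod_list (map vacuum_factor vs)"
    unfolding ghost_vacuum_eq s by (simp add: mult.assoc)
  then show ?thesis using ghost_adj_square[OF q] by (simp add: vacuum_factor_def mult.assoc)
qed

lemma ghost_vacuum_idem: "G0 * G0 = G0"
proof -
  have "prod_list (map vacuum_factor xs) * prod_list (map vacuum_factor xs) = prod_list (map vacuum_factor xs)"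
    if "set xs \<subseteq> pos" "distinct xs" for xs
    using that
  proof (induction xs)
    case (Cons x xs)
    have "vacuum_factor x * prod_list (map vacuum_factor xs) = prod_list (map vacuum_factor xs) * vacuum_factor x"
      using Cons.prems by (intro commute_prod_list) (auto intro: vacuum_factor_commute)
    have "prod_list (map vacuum_factor (x # xs)) * prod_list (map vacuum_factor (x # xs))
       = vacuum_factor x * (prod_list (map vacuum_factor xs) * vacuum_factor x) * prod_list (map vacuum_factor xs)"
      by (simp add: mult.assoc)
    also have "\<dots> = vacuum_factor x * (vacuum_factor x * prod_list (map vacuum_factor xs)) * prod_list (map vacuum_factor xs)"
      using \<open>vacuum_factor x * prod_list (map vacuum_factor xs) = _\<close> by (simp only:)
    also have "\<dots> = (vacuum_factor x * vacuum_factor x) * (prod_list (map vacuum_factor xs) * prod_list (map vacuum_factor xs))"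
      by (simp only: mult.assoc)
    finally show ?case using Cons vacuum_factor_idem[of x] by simp
  qed simp
  then show ?thesis unfolding ghost_vacuum_eq using sorted_list_of_pos by simp
qed

lemma commute_ghost_vacuum:
  assumes "\<And>k. k \<in> pos \<Longrightarrow> x * g k = g k * x \<and> x * adj (g k) = adj (g k) * x"
  shows "x * G0 = G0 * x"
  unfolding ghost_vacuum_eq
proof (rule commute_prod_list)
  fix y assume "y \<in> set (map vacuum_factor (sorted_list_of_set pos))"
  then obtain k where k: "k \<in> pos" "y = vacuum_factor k" using sorted_list_of_pos(1) by auto
  have "x * vacuum_factor k = (x * g k) * adj (g k)"
    by (simp add: vacuum_factor_def mult.assoc)
  also have "\<dots> = g k * (x * adj (g k))"
    using assms[OF k(1)] by (simp add: mult.assoc)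
  also have "\<dots> = vacuum_factor k * x"
    using assms[OF k(1)] by (simp add: vacuum_factor_def mult.assoc)
  finally show "x * y = y * x" using k by simp
qed

definition ghost_mode :: "real \<Rightarrow> 'a" where
  "ghost_mode y = (if 0 < y then g y else adj (g (- y)))"

lemma sum_ghost_modes:
  "(\<Sum>p\<in>pos. F p * g p + F (- p) * adj (g p)) = (\<Sum>p\<in>all. F p * ghost_mode p)"
proof -
  have finite: "finite pos" using finite_pos_momenta[OF L_pos] .
  have "(\<Sum>p\<in>all. F p * ghost_mode p)
      = (\<Sum>p\<in>pos. F p * ghost_mode p) + (\<Sum>p\<in>uminus ` pos. F p * ghost_mode p)"
    unfolding all_momenta_eq[OF L_pos] using finite
    by (intro sum.union_disjoint) (auto simp: pos_momenta_def)
  also have "\<dots> = (\<Sum>p\<in>pos. F p * g p) + (\<Sum>p\<in>pos. F (- p) * adj (g p))"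
    by (subst sum.reindex) (auto simp: inj_on_def ghost_mode_def pos_momenta_def intro!: sum.cong)
  finally show ?thesis by (simp add: sum.distrib)
qed

lemma ghost_anticommute_mode:
  assumes q: "q \<in> pos" and y: "y \<in> all"
  shows "g q * ghost_mode y = kdelta q (- y) *\<^sub>R 1 - ghost_mode y * g q"
  using L_pos y
proof (cases rule: all_momenta_cases)
  case 1
  then have "kdelta q (- y) = 0" using q by (simp add: kdelta_def pos_momenta_def)
  then show ?thesis using 1 ghost_anticommute[OF q, of y] by (simp add: ghost_mode_def)
next
  case 2
  then show ?thesis using car_ggd[OF q 2(2)] by (simp add: ghost_mode_def kdelta_def eq_diff_eq)
qed

lemma vacuum_mul_ghost_mode: "y \<in> all \<Longrightarrow> y < 0 \<Longrightarrow> G0 * ghost_mode y = 0"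
  using vacuum_mul_ghost_adj by (auto simp: ghost_mode_def elim: all_momenta_cases[OF L_pos])

lemma ghost_mul_prod_ghost_modes:
  assumes q: "q \<in> pos"
  shows "set ys \<subseteq> all \<Longrightarrow> g q * prod_list (map ghost_mode ys) =
    (\<Sum>j<length ys. ((-1)^j * kdelta q (- (ys ! j))) *\<^sub>R prod_list (map ghost_mode (remove_nth j ys)))
    + ((-1)^length ys) *\<^sub>R (prod_list (map ghost_mode ys) * g q)"
proof (induction ys)
  case (Cons y ys)
  let ?P = "prod_list (map ghost_mode ys)"
  let ?S = "\<lambda>c. \<Sum>j<length ys. ((-1)^j * kdelta q (- (ys ! j))) *\<^sub>R (c * prod_list (map ghost_mode (remove_nth j ys)))"
  have y: "y \<in> all" and IH: "g q * ?P = ?S 1 + ((-1)^length ys) *\<^sub>R (?P * g q)"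
    using Cons by auto
  have "g q * prod_list (map ghost_mode (y # ys)) = (g q * ghost_mode y) * ?P"
    by (simp add: mult.assoc)
  also have "\<dots> = kdelta q (- y) *\<^sub>R ?P - ghost_mode y * (g q * ?P)"
    unfolding ghost_anticommute_mode[OF q y] by (simp add: algebra_simps)
  also have "\<dots> = kdelta q (- y) *\<^sub>R ?P - ?S (ghost_mode y) - ((-1)^length ys) *\<^sub>R (ghost_mode y * ?P * g q)"
    unfolding IH by (simp add: algebra_simps sum_distrib_left)
  also have "kdelta q (- y) *\<^sub>R ?P - ?S (ghost_mode y)
      = (\<Sum>j<length (y # ys). ((-1)^j * kdelta q (- ((y # ys) ! j))) *\<^sub>R prod_list (map ghost_mode (remove_nth j (y # ys))))"
    by (simp add: sum.lessThan_Suc_shift sum_negf[symmetric] del: sum.lessThan_Suc)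
  finally show ?case by (simp add: mult.assoc)
qed simp

lemma ghost_vacuum_wick:
  "set ps \<subseteq> all \<Longrightarrow> G0 * prod_list (map ghost_mode ps) * G0 = pfaffian (length ps) (contraction_matrix ps) *\<^sub>R G0"
proof (induction "length ps" arbitrary: ps rule: less_induct)
  case less
  show ?case
  proof (cases ps)
    case Nil
    then show ?thesis using ghost_vacuum_idem by (simp add: pfaffian_def)
  next
    case (Cons x xs)
    have x: "x \<in> all" and xs: "set xs \<subseteq> all" using less.prems Cons by auto
    show ?thesis
    proof (cases rule: all_momenta_cases[OF L_pos x])
      case 1
      have IH: "G0 * prod_list (map ghost_mode (remove_nth j xs)) * G0
          = pfaffian (length (remove_nth j xs)) (contraction_matrix (remove_nth j xs)) *\<^sub>R G0"
        if "j < length xs" for j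
        using less.hyps[of "remove_nth j xs"] that Cons set_remove_nth_subset[of j xs] xs
        by (simp add: length_remove_nth)
      have "G0 * prod_list (map ghost_mode ps) * G0 = G0 * (g x * prod_list (map ghost_mode xs)) * G0"
        using Cons 1 by (simp add: ghost_mode_def mult.assoc)
      also have "\<dots> = (\<Sum>j<length xs. ((-1)^j * kdelta x (- (xs ! j)))
            *\<^sub>R (G0 * prod_list (map ghost_mode (remove_nth j xs)) * G0))
          + ((-1)^length xs) *\<^sub>R (G0 * prod_list (map ghost_mode xs) * (g x * G0))"
        unfolding ghost_mul_prod_ghost_modes[OF 1(2) xs]
        by (simp add: algebra_simps sum_distrib_left sum_distrib_right)
      also have "\<dots> = (\<Sum>j<length xs. ((-1)^j * kdelta x (- (xs ! j)))
            *\<^sub>R (pfaffian (length (remove_nth j xs)) (contraction_matrix (remove_nth j xs)) *\<^sub>R G0))"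
        using ghost_mul_vacuum[OF 1(2)] IH by simp
      also have "\<dots> = pfaffian (length ps) (contraction_matrix ps) *\<^sub>R G0"
        unfolding Cons pfaffian_contraction_matrix_Cons using 1
        by (simp add: heaviside_def scaleR_sum_left mult.assoc)
      finally show ?thesis .
    next
      case 2
      then have "G0 * prod_list (map ghost_mode ps) * G0 = 0"
        using vacuum_mul_ghost_mode[OF x] Cons by (simp add: mult.assoc[symmetric])
      moreover have "heaviside x = 0" using 2 by (simp add: heaviside_def)
      ultimately show ?thesis unfolding Cons pfaffian_contraction_matrix_Cons by simp
    qed
  qed
qed

lemma ghost_vacuum_wick_weighted:
  assumes p: "\<And>i. i < n \<Longrightarrow> p i \<in> all"
    and w: "\<And>i k. i < n \<Longrightarrow> k \<in> pos \<Longrightarrow> w i * g k = g k * w i \<and> w i * adj (g k) = adj (g k) * w i"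
  shows "G0 * prod_list (map (\<lambda>i. w i * ghost_mode (p i)) [0..<n]) * G0
       = prod_list (map w [0..<n]) * of_real (pfaffian n (skew_upper (\<lambda>i j. heaviside (p i) * kdelta (p i) (- p j)))) * G0"
proof -
  let ?W = "prod_list (map w [0..<n])" and ?ps = "map p [0..<n]"
  have "w i * ghost_mode (p j) = ghost_mode (p j) * w i" if "i < n" "j < n" for i j
    by (cases rule: all_momenta_cases[OF L_pos p[OF that(2)]])
      (use w[OF that(1)] in \<open>auto simp: ghost_mode_def\<close>)
  then have "G0 * prod_list (map (\<lambda>i. w i * ghost_mode (p i)) [0..<n]) * G0
      = G0 * (?W * prod_list (map ghost_mode ?ps)) * G0"
    by (subst prod_list_map_mult_commuting) (simp_all add: o_def)
  also have "\<dots> = ?W * (G0 * prod_list (map ghost_mode ?ps) * G0)"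
  proof -
    have "G0 * ?W = ?W * G0"
    proof (rule commute_prod_list)
      fix y assume "y \<in> set (map w [0..<n])"
      then obtain i where i: "i < n" "y = w i" by auto
      have "w i * G0 = G0 * w i" by (rule commute_ghost_vacuum) (rule w[OF i(1)])
      then show "G0 * y = y * G0" using i by simp
    qed
    then show ?thesis by (simp add: mult.assoc[symmetric])
  qed
  also have "\<dots> = ?W * (pfaffian (length ?ps) (contraction_matrix ?ps) *\<^sub>R G0)"
    using p by (subst ghost_vacuum_wick) auto
  also have "pfaffian (length ?ps) (contraction_matrix ?ps)
      = pfaffian n (skew_upper (\<lambda>i j. heaviside (p i) * kdelta (p i) (- p j)))"
    by simp (rule pfaffian_cong, simp add: contraction_matrix_def skew_upper_def)
  finally show ?thesis by (simp add: scaleR_conv_of_real mult.assoc)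
qed

end

theorem lemma1:
  fixes L n :: nat
    and adj :: "'a::real_algebra_1 \<Rightarrow> 'a"
    and g :: "real \<Rightarrow> 'a"
    and W :: "nat \<Rightarrow> real \<Rightarrow> 'a"
    and a :: "nat \<Rightarrow> 'a"
  assumes L_pos: "0 < L"
    and adj: "is_adjoint adj"
    and car_gg: "\<And>p q. p \<in> pos_momenta L \<Longrightarrow> q \<in> pos_momenta L \<Longrightarrow>
                   g p * g q + g q * g p = 0"
    and car_ggd: "\<And>p q. p \<in> pos_momenta L \<Longrightarrow> q \<in> pos_momenta L \<Longrightarrow>
                   g p * adj (g q) + adj (g q) * g p = (if p = q then 1 else 0)"
    and W_adj: "\<And>i p. i < n \<Longrightarrow> p \<in> pos_momenta L \<Longrightarrow> W i (- p) = adj (W i p)"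
    and W_comm_g: "\<And>i p q. i < n \<Longrightarrow> p \<in> all_momenta L \<Longrightarrow> q \<in> pos_momenta L \<Longrightarrow>
                   W i p * g q = g q * W i p"
    and W_comm_gd: "\<And>i p q. i < n \<Longrightarrow> p \<in> all_momenta L \<Longrightarrow> q \<in> pos_momenta L \<Longrightarrow>
                   W i p * adj (g q) = adj (g q) * W i p"
    and a_def: "\<And>i. i < n \<Longrightarrow> a i = (1 / sqrt (real L)) *\<^sub>R
                   (\<Sum>p\<in>pos_momenta L. W i p * g p + W i (- p) * adj (g p))"
    and a_majorana: "\<And>i. i < n \<Longrightarrow> adj (a i) = a i \<and> a i * a i = 1"
  shows "ghost_vacuum L g adj * prod_list (map a [0..<n]) * ghost_vacuum L g adj
         = (1 / sqrt (real L) ^ n) *\<^sub>R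
           (\<Sum>p\<in>PiE {..<n} (\<lambda>_. all_momenta L).
              prod_list (map (\<lambda>i. W i (p i)) [0..<n])
              * of_real (pfaffian n (skew_upper (\<lambda>i j. heaviside (p i) * kdelta (p i) (- p j))))
              * ghost_vacuum L g adj)"
proof -
  interpret ghost_modes L g adj
    using L_pos adj car_gg car_ggd by unfold_locales auto
  let ?M = "PiE {..<n} (\<lambda>_. all_momenta L)"
  let ?r = "1 / sqrt (real L)"
  have "a i = ?r *\<^sub>R (\<Sum>p\<in>all. W i p * ghost_mode p)" if "i < n" for i
    using a_def[OF that] sum_ghost_modes by simp
  then have "prod_list (map a [0..<n]) = prod_list (map (\<lambda>i. ?r *\<^sub>R (\<Sum>p\<in>all. W i p * ghost_mode p)) [0..<n])"
    by (intro arg_cong[where f=prod_list] map_cong) auto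
  also have "\<dots> = ?r ^ n *\<^sub>R (\<Sum>p\<in>?M. prod_list (map (\<lambda>i. W i (p i) * ghost_mode (p i)) [0..<n]))"
    by (simp add: prod_list_map_scaleR prod_list_sum_PiE[OF finite_all_momenta[OF L_pos]])
  moreover have "G0 * prod_list (map (\<lambda>i. W i (p i) * ghost_mode (p i)) [0..<n]) * G0
      = prod_list (map (\<lambda>i. W i (p i)) [0..<n])
        * of_real (pfaffian n (skew_upper (\<lambda>i j. heaviside (p i) * kdelta (p i) (- p j)))) * G0"
    if "p \<in> ?M" for p
    using that by (intro ghost_vacuum_wick_weighted) (auto simp: PiE_iff intro!: W_comm_g W_comm_gd)
  ultimately show ?thesis
    by (simp add: sum_distrib_left sum_distrib_right power_one_over cong: sum.cong)
qed

end
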